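(* Let $p(x)=\sum_k a_{2k}x^{2k}\in\mathbb{Q}[x]$ have only even powers of $x$. Let $R=\mathbb{Q}[x_a,x_b,x_c,x_d]/(x_a+x_b-x_c-x_d)$, $w=p(x_c)+p(x_d)-p(x_a)-p(x_b)$, and let $\bar\cdot:R\to R$ be the ring homomorphism with $\bar x_a=-x_b$, $\bar x_b=-x_a$, $\bar x_c=-x_d$, $\bar x_d=-x_c$; applying it to the entries of maps induces an endofunctor $\bar\cdot$ of $\mathrm{hmf}_2$ which is the identity on objects and an involution on morphisms. Let $\mathcal F$ be the grading shift functor $\{2\}$ and $\mathcal G$ the identity functor on $\mathrm{hmf}_2$, and let $f:\mathcal F\to\mathcal G$ be the natural transformation given on each object by multiplication by $x_a+x_b$. Then there is an operation $\partial:\mathrm{Hom}_{\mathrm{hmf}_2}(A,B)\to\mathrm{Hom}_{\mathrm{hmf}_2}(\mathcal G A,\mathcal F B)$ such that $\mathcal C=\mathrm{hmf}_2$, $\mathcal F,\mathcal G,\bar\cdot,f,\partial$ satisfy: (1) $\partial$ is $\mathbb{Z}$-linear; (2) $\mathcal G(\phi-\bar\phi)=f_B\,\partial\phi$ and $\mathcal F(\phi-\bar\phi)=\partial\phi\,f_A$ for all $\phi\in\mathrm{Hom}(A,B)$; (3) $\partial(\psi\phi)=\partial\psi\,\mathcal G\phi+\mathcal F\bar\psi\,\partial\phi=\partial\psi\,\mathcal G\bar\phi+\mathcal F\psi\,\partial\phi$ for composable $\phi,\psi$.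
   Context: Matrix factorizations over a graded commutative $\mathbb{Q}$-algebra $R$ with homogeneous potential $w$: free graded $C=C^0\oplus C^1$ with $d^0:C^0\to C^1$, $d^1:C^1\to C^0$ of $q$-degree $\deg(w)/2$, $d^1d^0=w=d^0d^1$; $\mathrm{hmf}_w(R)$ is the homotopy category (degree-0 morphisms modulo homotopy); $\{k\}$ is a $q$-shift (if $p$ is not homogeneous, $q$-gradings are ignored). For $uv=w$, $K(u;v)$ has $C^0=R$, $C^1=R\{(\deg v-\deg u)/2\}$, $d^0=u$, $d^1=v$. With $n+1=\deg p$, $v_1=x_c-x_a$, $v_2=(x_c-x_a)(x_c-x_b)$, set $C_p(D_r)=K(w/v_1;v_1)\{n-1\}$ and $C_p(D_s)=K(w/v_2;v_2)\{-1\}$ (the complexes of an oriented smoothing and a singular crossing). $\mathrm{hmf}_2$ is the full subcategory of $\mathrm{hmf}_w(R)$ whose objects are finite direct sums of shifts (in $q$-grading and $\mathbb{Z}/2$-grading) of $C_p(D_r)$ and $C_p(D_s)$. *)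

theory Defs
  imports "HOL-Computational_Algebra.Polynomial" "Jordan_Normal_Form.Matrix"
begin

text \<open>R is modelled via the canonical isomorphism R = Q[x_a,x_b,x_c] (x_d := x_a+x_b-x_c),
  realised as nested univariate polynomials: innermost variable x_a, then x_b, outermost x_c.\<close>

type_synonym R = "rat poly poly poly"

definition emb :: "rat \<Rightarrow> R" where "emb c = [:[:[:c:]:]:]"

definition xa :: R where "xa = [:[:[:0, 1:]:]:]"
definition xb :: R where "xb = [:[:0, 1:]:]"
definition xc :: R where "xc = [:0, 1:]"
definition xd :: R where "xd = xa + xb - xc"

definition peval :: "rat poly \<Rightarrow> R \<Rightarrow> R" where
  "peval p r = poly (map_poly emb p) r"

text \<open>substitution x_a := a, x_b := b, x_c := c (an R-algebra endomorphism of Q[x_a,x_b,x_c])\<close>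
definition ev3 :: "R \<Rightarrow> R \<Rightarrow> R \<Rightarrow> R \<Rightarrow> R" where
  "ev3 r a b c = poly (map_poly (\<lambda>q. poly (map_poly (\<lambda>s. poly (map_poly emb s) a) q) b) r) c"

text \<open>the involution bar: x_a -> -x_b, x_b -> -x_a, x_c -> -x_d (hence x_d -> -x_c)\<close>
definition rbar :: "R \<Rightarrow> R" where "rbar r = ev3 r (- xb) (- xa) (- xd)"

definition wpot :: "rat poly \<Rightarrow> R" where
  "wpot p = peval p xc + peval p xd - peval p xa - peval p xb"

definition v1 :: R where "v1 = xc - xa"
definition v2 :: R where "v2 = (xc - xa) * (xc - xb)"

text \<open>q-grading: deg x_a = deg x_b = deg x_c = deg x_d = 2. An element is homogeneous of
  q-degree d if all its monomials have q-degree d (0 is homogeneous of every degree).\<close>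
definition ishom :: "R \<Rightarrow> int \<Rightarrow> bool" where
  "ishom r d = (\<forall>i j k. coeff (coeff (coeff r i) j) k \<noteq> 0 \<longrightarrow> int (2 * (i + j + k)) = d)"

text \<open>p is homogeneous (deg x = 2) iff it has at most one nonzero coefficient\<close>
definition p_homogeneous :: "rat poly \<Rightarrow> bool" where
  "p_homogeneous p = (\<exists>m. \<forall>k. coeff p k \<noteq> 0 \<longrightarrow> k = m)"

text \<open>A free graded matrix factorization: C^0 = sum of R{g} for g in gens0, C^1 likewise
  (the generator of R{k} sits in q-degree k), d^0 : C^0 -> C^1, d^1 : C^1 -> C^0 as matrices.\<close>
record mf =
  gens0 :: "int list"
  gens1 :: "int list"
  dif0 :: "R mat"
  dif1 :: "R mat"

definition Kmf :: "R \<Rightarrow> R \<Rightarrow> int \<Rightarrow> int \<Rightarrow> mf" where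
  "Kmf u v k0 k1 = \<lparr>gens0 = [k0], gens1 = [k1], dif0 = mat 1 1 (\<lambda>_. u), dif1 = mat 1 1 (\<lambda>_. v)\<rparr>"

definition nn :: "rat poly \<Rightarrow> int" where "nn p = int (degree p) - 1"

text \<open>C_p(D_r) = K(w/v1; v1){n-1}: C^0 = R{n-1}, C^1 = R{(deg v1 - deg(w/v1))/2 + n - 1} = R{0}\<close>
definition CDr :: "rat poly \<Rightarrow> mf" where
  "CDr p = Kmf (wpot p div v1) v1 (nn p - 1) 0"

text \<open>C_p(D_s) = K(w/v2; v2){-1}: C^0 = R{-1}, C^1 = R{(deg v2 - deg(w/v2))/2 - 1} = R{2-n}\<close>
definition CDs :: "rat poly \<Rightarrow> mf" where
  "CDs p = Kmf (wpot p div v2) v2 (-1) (2 - nn p)"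

definition qshift :: "int \<Rightarrow> mf \<Rightarrow> mf" where
  "qshift k C = C\<lparr>gens0 := map (\<lambda>d. d + k) (gens0 C), gens1 := map (\<lambda>d. d + k) (gens1 C)\<rparr>"

definition zshift :: "mf \<Rightarrow> mf" where
  "zshift C = \<lparr>gens0 = gens1 C, gens1 = gens0 C, dif0 = - dif1 C, dif1 = - dif0 C\<rparr>"

definition dsum :: "mf \<Rightarrow> mf \<Rightarrow> mf" where
  "dsum C D = \<lparr>gens0 = gens0 C @ gens0 D, gens1 = gens1 C @ gens1 D,
     dif0 = four_block_mat (dif0 C) (0\<^sub>m (length (gens1 C)) (length (gens0 D)))
                           (0\<^sub>m (length (gens1 D)) (length (gens0 C))) (dif0 D),
     dif1 = four_block_mat (dif1 C) (0\<^sub>m (length (gens0 C)) (length (gens1 D)))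
                           (0\<^sub>m (length (gens0 D)) (length (gens1 C))) (dif1 D)\<rparr>"

definition zero_mf :: mf where
  "zero_mf = \<lparr>gens0 = [], gens1 = [], dif0 = 0\<^sub>m 0 0, dif1 = 0\<^sub>m 0 0\<rparr>"

text \<open>a summand: (singular?, Z/2-shifted?, q-shift)\<close>
datatype smd = Smd bool bool int

fun summand :: "rat poly \<Rightarrow> smd \<Rightarrow> mf" where
  "summand p (Smd s z k) = (if z then zshift else id) (qshift k (if s then CDs p else CDr p))"

fun mfobj :: "rat poly \<Rightarrow> smd list \<Rightarrow> mf" where
  "mfobj p [] = zero_mf"
| "mfobj p (x # xs) = dsum (summand p x) (mfobj p xs)"

definition in_hmf2 :: "rat poly \<Rightarrow> mf \<Rightarrow> bool" where
  "in_hmf2 p C = (\<exists>xs. C = mfobj p xs)"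

type_synonym mor = "R mat \<times> R mat"

text \<open>degree-0 morphisms of matrix factorizations (grading ignored when p is not homogeneous)\<close>
definition ismor :: "rat poly \<Rightarrow> mf \<Rightarrow> mf \<Rightarrow> mor \<Rightarrow> bool" where
  "ismor p C D \<phi> =
    (fst \<phi> \<in> carrier_mat (length (gens0 D)) (length (gens0 C)) \<and>
     snd \<phi> \<in> carrier_mat (length (gens1 D)) (length (gens1 C)) \<and>
     dif0 D * fst \<phi> = snd \<phi> * dif0 C \<and>
     dif1 D * snd \<phi> = fst \<phi> * dif1 C \<and>
     (p_homogeneous p \<longrightarrow>
       (\<forall>i < length (gens0 D). \<forall>j < length (gens0 C).
          ishom (fst \<phi> $$ (i, j)) (gens0 C ! j - gens0 D ! i)) \<and>
       (\<forall>i < length (gens1 D). \<forall>j < length (gens1 C).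
          ishom (snd \<phi> $$ (i, j)) (gens1 C ! j - gens1 D ! i))))"

definition htpy :: "mf \<Rightarrow> mf \<Rightarrow> mor \<Rightarrow> mor \<Rightarrow> bool" where
  "htpy C D \<phi> \<psi> =
    (\<exists>h0 h1. h0 \<in> carrier_mat (length (gens1 D)) (length (gens0 C)) \<and>
             h1 \<in> carrier_mat (length (gens0 D)) (length (gens1 C)) \<and>
             fst \<phi> - fst \<psi> = dif1 D * h0 + h1 * dif0 C \<and>
             snd \<phi> - snd \<psi> = dif0 D * h1 + h0 * dif1 C)"

definition mcomp :: "mor \<Rightarrow> mor \<Rightarrow> mor" where
  "mcomp \<psi> \<phi> = (fst \<psi> * fst \<phi>, snd \<psi> * snd \<phi>)"

definition madd :: "mor \<Rightarrow> mor \<Rightarrow> mor" where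
  "madd \<phi> \<psi> = (fst \<phi> + fst \<psi>, snd \<phi> + snd \<psi>)"

definition msub :: "mor \<Rightarrow> mor \<Rightarrow> mor" where
  "msub \<phi> \<psi> = (fst \<phi> - fst \<psi>, snd \<phi> - snd \<psi>)"

definition mbar :: "mor \<Rightarrow> mor" where
  "mbar \<phi> = (map_mat rbar (fst \<phi>), map_mat rbar (snd \<phi>))"

definition fnat :: "mf \<Rightarrow> mor" where
  "fnat B = ((xa + xb) \<cdot>\<^sub>m 1\<^sub>m (length (gens0 B)), (xa + xb) \<cdot>\<^sub>m 1\<^sub>m (length (gens1 B)))"

end

(* The involution bar fixes Q and moves every generator by x_a + x_b
   (x_a - bar x_a = x_b - bar x_b = x_c - bar x_c = x_a + x_b), so x_a + x_b divides r - bar r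
   for every r, and dpart r = (r - bar r) / (x_a + x_b) is a bar-twisted derivation lowering the
   q-degree by 2: dpart (x y) = dpart x y + bar x dpart y = dpart x bar y + x dpart y.
   The operation \<partial> applies dpart entrywise to the two matrices of a morphism.
   Since p is even, w, v1 and v2 are fixed by bar, hence so are the differentials of all objects
   of hmf_2. Therefore \<partial> commutes with the differentials, which makes \<partial>\<phi> a morphism and
   transports homotopies, and the identities (1)-(3) already hold on the level of matrices. *)

theory Submission
  imports
    Defs
    "Jordan_Normal_Form.Char_Poly"
begin

section \<open>The ring R and the involution\<close>

lemma R_induct [case_names emb xa xb xc add mult]:
  assumes emb: "\<And>c. P (emb c)" and xa: "P xa" and xb: "P xb" and xc: "P xc"
    and add: "\<And>x y. P x \<Longrightarrow> P y \<Longrightarrow> P (x + y)"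
    and mult: "\<And>x y. P x \<Longrightarrow> P y \<Longrightarrow> P (x * y)"
  shows "P r"
proof -
  have const1: "P [:[:s:]:]" for s :: "rat poly"
  proof (induct s)
    case 0 then show ?case using emb[of 0] by (simp add: emb_def)
  next
    case (pCons c s)
    have "[:[:pCons c s:]:] = emb c + xa * [:[:s:]:]"
      by (simp add: emb_def xa_def)
    then show ?case using pCons emb xa add mult by metis
  qed
  have const2: "P [:q:]" for q :: "rat poly poly"
  proof (induct q)
    case 0 then show ?case using const1[of 0] by simp
  next
    case (pCons s q)
    have "[:pCons s q:] = [:[:s:]:] + xb * [:q:]"
      by (simp add: xb_def)
    then show ?case using pCons const1 xb add mult by metis
  qed
  show ?thesis
  proof (induct r)
    case 0 then show ?case using const2[of 0] by simp
  next
    case (pCons q r)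
    have "pCons q r = [:q:] + xc * r"
      by (simp add: xc_def)
    then show ?case using pCons const2 xc add mult by metis
  qed
qed

interpretation emb: comm_ring_hom emb
  by unfold_locales (auto simp: emb_def pCons_one)

lemma comm_ring_hom_comp:
  assumes "comm_ring_hom f" and "comm_ring_hom g" shows "comm_ring_hom (\<lambda>x. f (g x))"
proof -
  interpret f: comm_ring_hom f by fact
  interpret g: comm_ring_hom g by fact
  show ?thesis by unfold_locales (simp_all add: f.hom_add g.hom_add f.hom_mult g.hom_mult)
qed

lemma comm_ring_hom_map_poly:
  assumes "comm_ring_hom h" shows "comm_ring_hom (map_poly h)"
proof -
  interpret map_poly_comm_ring_hom h by (rule map_poly_comm_ring_hom.intro) fact
  show ?thesis by (rule comm_ring_hom_axioms)
qed

lemma comm_ring_hom_poly_map_poly: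
  "comm_ring_hom h \<Longrightarrow> comm_ring_hom (\<lambda>p. poly (map_poly h p) x)"
  by (rule comm_ring_hom_comp[OF poly_hom.comm_ring_hom_axioms comm_ring_hom_map_poly])

lemma comm_ring_hom_ev3: "comm_ring_hom (\<lambda>r. ev3 r a b c)"
  unfolding ev3_def by (intro comm_ring_hom_poly_map_poly emb.comm_ring_hom_axioms)

lemma ev3_emb [simp]: "ev3 (emb k) a b c = emb k"
  by (cases "k = 0") (simp_all add: ev3_def emb_def map_poly_pCons)

lemma ev3_xa [simp]: "ev3 xa a b c = a"
  by (simp add: ev3_def emb_def xa_def map_poly_pCons pCons_one)

lemma ev3_xb [simp]: "ev3 xb a b c = b"
  by (simp add: ev3_def emb_def xb_def map_poly_pCons pCons_one)

lemma ev3_xc [simp]: "ev3 xc a b c = c"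
  by (simp add: ev3_def emb_def xc_def map_poly_pCons pCons_one)

interpretation rbar: comm_ring_hom rbar
  unfolding rbar_def by (rule comm_ring_hom_ev3)

lemma rbar_emb [simp]: "rbar (emb k) = emb k"
  and rbar_xa [simp]: "rbar xa = - xb"
  and rbar_xb [simp]: "rbar xb = - xa"
  and rbar_xc [simp]: "rbar xc = - xd"
  by (simp_all add: rbar_def)

lemma rbar_xd [simp]: "rbar xd = - xc"
  by (simp add: xd_def rbar.hom_add rbar.hom_minus)

lemma xa_plus_xb_dvd_diff_rbar: "xa + xb dvd r - rbar r"
proof (induct r rule: R_induct)
  case (emb c)
  show ?case by simp
next
  case xa
  show ?case by simp
next
  case xb
  show ?case by (simp add: add.commute)
next
  case xc
  show ?case by (simp add: xd_def)
next
  case (add x y)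
  have "x + y - rbar (x + y) = (x - rbar x) + (y - rbar y)"
    by (simp add: rbar.hom_add algebra_simps)
  then show ?case using add by (metis dvd_add)
next
  case (mult x y)
  have "x * y - rbar (x * y) = (x - rbar x) * y + rbar x * (y - rbar y)"
    by (simp add: rbar.hom_mult algebra_simps)
  then show ?case using mult by simp
qed

lemma xa_plus_xb_nonzero: "xa + xb \<noteq> 0"
  by (simp add: xa_def xb_def)

section \<open>The twisted derivation\<close>

definition dpart :: "R \<Rightarrow> R" where
  "dpart r = (r - rbar r) div (xa + xb)"

lemma mult_dpart: "(xa + xb) * dpart r = r - rbar r"
  unfolding dpart_def using xa_plus_xb_dvd_diff_rbar by (rule dvd_mult_div_cancel)

lemma dpart_eqI: "(xa + xb) * z = r - rbar r \<Longrightarrow> dpart r = z"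
  using mult_dpart[of r] xa_plus_xb_nonzero by (metis mult_left_cancel)

lemma dpart_add: "dpart (x + y) = dpart x + dpart y"
  by (rule dpart_eqI) (simp add: distrib_left mult_dpart rbar.hom_add)

lemma dpart_diff: "dpart (x - y) = dpart x - dpart y"
  by (rule dpart_eqI) (simp add: right_diff_distrib mult_dpart rbar.hom_minus)

lemma dpart_rbar_fixed: "rbar x = x \<Longrightarrow> dpart x = 0"
  by (rule dpart_eqI) simp

lemma dpart_mult: "dpart (x * y) = dpart x * y + rbar x * dpart y"
proof (rule dpart_eqI)
  have "(xa + xb) * (dpart x * y + rbar x * dpart y)
      = ((xa + xb) * dpart x) * y + rbar x * ((xa + xb) * dpart y)"
    by (simp only: distrib_left mult.assoc mult.left_commute)
  also have "\<dots> = x * y - rbar (x * y)"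
    by (simp only: mult_dpart rbar.hom_mult left_diff_distrib right_diff_distrib)
  finally show "(xa + xb) * (dpart x * y + rbar x * dpart y) = x * y - rbar (x * y)" .
qed

lemma dpart_mult': "dpart (x * y) = dpart x * rbar y + x * dpart y"
proof (rule dpart_eqI)
  have "(xa + xb) * (dpart x * rbar y + x * dpart y)
      = ((xa + xb) * dpart x) * rbar y + x * ((xa + xb) * dpart y)"
    by (simp only: distrib_left mult.assoc mult.left_commute)
  also have "\<dots> = x * y - rbar (x * y)"
    by (simp only: mult_dpart rbar.hom_mult left_diff_distrib right_diff_distrib)
  finally show "(xa + xb) * (dpart x * rbar y + x * dpart y) = x * y - rbar (x * y)" .
qed

section \<open>Homogeneity\<close>

text \<open>Rescaling all variables by t multiplies an element homogeneous of q-degree 2m by t^m;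
  for t = 2 this characterizes homogeneity, which is how bar and division by x_a + x_b are
  seen to respect the grading.\<close>

definition scale :: "rat \<Rightarrow> R \<Rightarrow> R" where
  "scale t r = map_poly (\<lambda>q. map_poly (\<lambda>s. s \<circ>\<^sub>p [:0, t:]) q \<circ>\<^sub>p [:0, [:t:]:]) r
     \<circ>\<^sub>p [:0, [:[:t:]:]:]"

interpretation scale: comm_ring_hom "scale t" for t
  unfolding scale_def
  by (intro comm_ring_hom_comp[OF pcompose_hom.comm_ring_hom_axioms] comm_ring_hom_map_poly
      pcompose_hom.comm_ring_hom_axioms)

lemma coeff_scale:
  "coeff (coeff (coeff (scale t r) i) j) k = t ^ (i + j + k) * coeff (coeff (coeff r i) j) k"
proof -
  have const_power: "[:c:] ^ n = [:c ^ n:]" for c :: "'a::comm_ring_1" and n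
    by (induct n) (simp_all add: pCons_one)
  show ?thesis
    by (simp add: scale_def coeff_pcompose_linear coeff_map_poly const_power power_add mult_ac)
qed

lemma scale_xa [simp]: "scale t xa = emb t * xa"
  and scale_xb [simp]: "scale t xb = emb t * xb"
  and scale_xc [simp]: "scale t xc = emb t * xc"
  by (simp_all add: scale_def xa_def xb_def xc_def emb_def map_poly_pCons pcompose_pCons)

lemma scale_emb [simp]: "scale t (emb c) = emb c"
  by (cases "c = 0") (simp_all add: scale_def emb_def map_poly_pCons)

lemma scale_rbar: "scale t (rbar r) = rbar (scale t r)"
  by (induct r rule: R_induct)
    (simp_all add: scale.hom_add scale.hom_mult scale.hom_uminus scale.hom_minus
      rbar.hom_add rbar.hom_mult rbar.hom_uminus xd_def algebra_simps)

lemma R_eqI: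
  "(\<And>i j k. coeff (coeff (coeff r i) j) k = coeff (coeff (coeff s i) j) k) \<Longrightarrow> r = s"
  by (simp add: poly_eq_iff)

lemma coeff_emb_mult:
  "coeff (coeff (coeff (emb c * r) i) j) k = c * coeff (coeff (coeff r i) j) k"
  by (simp add: emb_def)

lemma scale_ishom: "ishom r (2 * int m) \<Longrightarrow> scale t r = emb (t ^ m) * r"
proof (rule R_eqI)
  fix i j k
  assume hom: "ishom r (2 * int m)"
  show "coeff (coeff (coeff (scale t r) i) j) k = coeff (coeff (coeff (emb (t ^ m) * r) i) j) k"
  proof (cases "coeff (coeff (coeff r i) j) k = 0")
    case False
    then have "int (2 * (i + j + k)) = 2 * int m" using hom unfolding ishom_def by blast
    then have "i + j + k = m" by presburger
    then show ?thesis by (simp add: coeff_scale coeff_emb_mult)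
  qed (simp add: coeff_scale coeff_emb_mult)
qed

lemma ishom_if_scale_2: "scale 2 r = emb (2 ^ m) * r \<Longrightarrow> ishom r (2 * int m)"
  unfolding ishom_def
proof (intro allI impI)
  fix i j k
  assume scale: "scale 2 r = emb (2 ^ m) * r" and nonzero: "coeff (coeff (coeff r i) j) k \<noteq> 0"
  have "coeff (coeff (coeff (scale 2 r) i) j) k = coeff (coeff (coeff (emb (2 ^ m) * r) i) j) k"
    using scale by simp
  then have "(2::rat) ^ (i + j + k) = 2 ^ m" using nonzero by (simp add: coeff_scale coeff_emb_mult)
  then show "int (2 * (i + j + k)) = 2 * int m" by (simp add: power_inject_exp)
qed

lemma ishom_nonzero_imp_even:
  assumes "ishom r d" and "r \<noteq> 0"
  shows "\<exists>m. d = 2 * int m"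
proof -
  define i j k where "i = degree r" and "j = degree (coeff r i)"
    and "k = degree (coeff (coeff r i) j)"
  have "coeff (coeff (coeff r i) j) k \<noteq> 0"
    using assms(2) by (simp add: i_def j_def k_def)
  then have "int (2 * (i + j + k)) = d" using assms(1) unfolding ishom_def by blast
  then show ?thesis by (intro exI[of _ "i + j + k"]) simp
qed

lemma ishom_zero [simp]: "ishom 0 d"
  by (simp add: ishom_def)

lemma ishom_diff: "ishom r d \<Longrightarrow> ishom s d \<Longrightarrow> ishom (r - s) d"
  unfolding ishom_def by (metis (no_types, lifting) coeff_diff diff_zero diff_self)

lemma ishom_rbar: "ishom r d \<Longrightarrow> ishom (rbar r) d"
proof (cases "r = 0")
  case False
  assume hom: "ishom r d"
  then obtain m where d: "d = 2 * int m" using False ishom_nonzero_imp_even by blast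
  have "scale 2 (rbar r) = rbar (emb (2 ^ m) * r)"
    using scale_ishom[of r m 2] hom d by (simp only: scale_rbar)
  then show ?thesis by (simp add: d rbar.hom_mult ishom_if_scale_2)
qed simp

lemma ishom_mult_xa_plus_xb: "ishom ((xa + xb) * q) d \<Longrightarrow> ishom q (d - 2)"
proof (cases "q = 0")
  case False
  assume hom: "ishom ((xa + xb) * q) d"
  have nonzero: "(xa + xb) * q \<noteq> 0" using False xa_plus_xb_nonzero by simp
  then obtain m where d: "d = 2 * int m" using hom ishom_nonzero_imp_even by blast
  have scaled: "emb t * (xa + xb) * scale t q = emb (t ^ m) * ((xa + xb) * q)" for t
    using scale_ishom[OF hom[unfolded d]] by (simp add: scale.hom_mult scale.hom_add algebra_simps)
  show ?thesis
  proof (cases m)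
    case 0
    then show ?thesis using scaled[of 0] nonzero by simp
  next
    case (Suc m')
    have "emb 2 * (xa + xb) * scale 2 q = emb 2 * (xa + xb) * (emb (2 ^ m') * q)"
      using scaled[of 2] Suc by (simp add: emb.hom_mult algebra_simps)
    moreover have "emb 2 * (xa + xb) \<noteq> 0"
      using xa_plus_xb_nonzero by (simp add: emb_def)
    ultimately have "scale 2 q = emb (2 ^ m') * q" by simp
    then show ?thesis using d Suc by (simp add: ishom_if_scale_2[of q m', simplified])
  qed
qed simp

lemma ishom_dpart: "ishom r d \<Longrightarrow> ishom (dpart r) (d - 2)"
  by (rule ishom_mult_xa_plus_xb) (simp add: mult_dpart ishom_diff ishom_rbar)

lemma map_mat_ident [simp]: "map_mat (\<lambda>x. x) A = A"
  by (rule eq_matI) simp_all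

lemma map_mat_twisted_derivation_mult:
  fixes d g h :: "'a::comm_ring \<Rightarrow> 'a"
  assumes d_add: "\<And>x y. d (x + y) = d x + d y"
    and d_mult: "\<And>x y. d (x * y) = d x * g y + h x * d y"
    and dims: "dim_col A = dim_row B"
  shows "map_mat d (A * B) = map_mat d A * map_mat g B + map_mat h A * map_mat d B"
proof (rule eq_matI)
  have "d 0 = 0" using d_add[of 0 0] by simp
  then have d_sum: "d (sum f S) = (\<Sum>x\<in>S. d (f x))" for f :: "nat \<Rightarrow> 'a" and S
    using sum_comp_morphism[of d f S] d_add by (simp add: o_def)
  fix i j
  assume "i < dim_row (map_mat d A * map_mat g B + map_mat h A * map_mat d B)"
    and "j < dim_col (map_mat d A * map_mat g B + map_mat h A * map_mat d B)"
  then show "map_mat d (A * B) $$ (i, j)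
      = (map_mat d A * map_mat g B + map_mat h A * map_mat d B) $$ (i, j)"
    using dims by (simp add: scalar_prod_def d_sum d_mult sum.distrib)
qed simp_all

lemma map_mat_dpart_mult:
  "dim_col A = dim_row B \<Longrightarrow>
    map_mat dpart (A * B) = map_mat dpart A * B + map_mat rbar A * map_mat dpart B"
  using map_mat_twisted_derivation_mult[of dpart "\<lambda>x. x" rbar] by (simp add: dpart_add dpart_mult)

lemma map_mat_dpart_mult':
  "dim_col A = dim_row B \<Longrightarrow>
    map_mat dpart (A * B) = map_mat dpart A * map_mat rbar B + A * map_mat dpart B"
  using map_mat_twisted_derivation_mult[of dpart rbar "\<lambda>x. x"] by (simp add: dpart_add dpart_mult')

lemma map_mat_dpart_rbar_fixed:
  assumes "map_mat rbar A = A" shows "map_mat dpart A = 0\<^sub>m (dim_row A) (dim_col A)"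
proof (rule eq_matI)
  fix i j assume "i < dim_row (0\<^sub>m (dim_row A) (dim_col A))" "j < dim_col (0\<^sub>m (dim_row A) (dim_col A))"
  moreover from this have "rbar (A $$ (i, j)) = A $$ (i, j)"
    using arg_cong[OF assms, of "\<lambda>M. M $$ (i, j)"] by simp
  ultimately show "map_mat dpart A $$ (i, j) = 0\<^sub>m (dim_row A) (dim_col A) $$ (i, j)"
    by (simp add: dpart_rbar_fixed)
qed simp_all

lemma map_mat_dpart_mult_rbar_fixed_left:
  assumes "dim_col A = dim_row B" and "map_mat rbar A = A"
  shows "map_mat dpart (A * B) = A * map_mat dpart B"
proof -
  have "map_mat dpart (A * B) = 0\<^sub>m (dim_row A) (dim_col A) * B + A * map_mat dpart B"
    using map_mat_dpart_mult[OF assms(1)] by (simp only: assms(2) map_mat_dpart_rbar_fixed)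
  also have "\<dots> = 0\<^sub>m (dim_row A) (dim_col B) + A * map_mat dpart B"
    using assms(1) by simp
  also have "\<dots> = A * map_mat dpart B"
    by (rule left_add_zero_mat) (rule carrier_matI; simp)
  finally show ?thesis .
qed

lemma map_mat_dpart_mult_rbar_fixed_right:
  assumes "dim_col A = dim_row B" and "map_mat rbar B = B"
  shows "map_mat dpart (A * B) = map_mat dpart A * B"
proof -
  have "map_mat dpart (A * B) = map_mat dpart A * B + A * 0\<^sub>m (dim_row B) (dim_col B)"
    using map_mat_dpart_mult'[OF assms(1)] by (simp only: assms(2) map_mat_dpart_rbar_fixed)
  also have "\<dots> = map_mat dpart A * B + 0\<^sub>m (dim_row A) (dim_col B)"
    using assms(1) by simp
  also have "\<dots> = map_mat dpart A * B"
    by (rule right_add_zero_mat) (rule carrier_matI; simp)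
  finally show ?thesis .
qed

lemma map_mat_dpart_add:
  "A \<in> carrier_mat n m \<Longrightarrow> B \<in> carrier_mat n m \<Longrightarrow>
    map_mat dpart (A + B) = map_mat dpart A + map_mat dpart B"
  by (rule eq_matI) (simp_all add: dpart_add)

lemma map_mat_dpart_diff:
  "A \<in> carrier_mat n m \<Longrightarrow> B \<in> carrier_mat n m \<Longrightarrow>
    map_mat dpart (A - B) = map_mat dpart A - map_mat dpart B"
  by (rule eq_matI) (simp_all add: dpart_diff)

lemma map_mat_dpart_homotopy:
  assumes "map_mat rbar D = D" and "map_mat rbar C = C"
    and "D \<in> carrier_mat n k" and "h \<in> carrier_mat k m"
    and "h' \<in> carrier_mat n l" and "C \<in> carrier_mat l m"
  shows "map_mat dpart (D * h + h' * C) = D * map_mat dpart h + map_mat dpart h' * C"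
proof -
  have "map_mat dpart (D * h + h' * C) = map_mat dpart (D * h) + map_mat dpart (h' * C)"
    using assms(3-6) by (intro map_mat_dpart_add) auto
  also have "\<dots> = D * map_mat dpart h + map_mat dpart h' * C"
    using assms map_mat_dpart_mult_rbar_fixed_left[of D h] map_mat_dpart_mult_rbar_fixed_right[of h' C]
    by (simp add: carrier_matD)
  finally show ?thesis .
qed

lemma xa_plus_xb_mult_map_mat_dpart:
  assumes "M \<in> carrier_mat n m"
  shows "((xa + xb) \<cdot>\<^sub>m 1\<^sub>m n) * map_mat dpart M = M - map_mat rbar M"
    and "map_mat dpart M * ((xa + xb) \<cdot>\<^sub>m 1\<^sub>m m) = M - map_mat rbar M"
proof -
  have "(xa + xb) \<cdot>\<^sub>m map_mat dpart M = M - map_mat rbar M"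
    using assms by (intro eq_matI) (simp_all add: mult_dpart)
  moreover have "((xa + xb) \<cdot>\<^sub>m 1\<^sub>m n) * map_mat dpart M = (xa + xb) \<cdot>\<^sub>m map_mat dpart M"
    using assms by (simp add: mult_smult_assoc_mat[of _ n n _ m])
  moreover have "map_mat dpart M * ((xa + xb) \<cdot>\<^sub>m 1\<^sub>m m) = (xa + xb) \<cdot>\<^sub>m map_mat dpart M"
    using assms by (simp add: mult_smult_distrib[of _ n m _ m])
  ultimately show "((xa + xb) \<cdot>\<^sub>m 1\<^sub>m n) * map_mat dpart M = M - map_mat rbar M"
    and "map_mat dpart M * ((xa + xb) \<cdot>\<^sub>m 1\<^sub>m m) = M - map_mat rbar M"
    by simp_all
qed

definition mdpart :: "mor \<Rightarrow> mor" where
  "mdpart \<phi> = (map_mat dpart (fst \<phi>), map_mat dpart (snd \<phi>))"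

definition wf_mf :: "mf \<Rightarrow> bool" where
  "wf_mf C \<longleftrightarrow> dif0 C \<in> carrier_mat (length (gens1 C)) (length (gens0 C)) \<and>
                dif1 C \<in> carrier_mat (length (gens0 C)) (length (gens1 C))"

definition bar_invariant_mf :: "mf \<Rightarrow> bool" where
  "bar_invariant_mf C \<longleftrightarrow>
     wf_mf C \<and> map_mat rbar (dif0 C) = dif0 C \<and> map_mat rbar (dif1 C) = dif1 C"

lemma ismor_carrier:
  assumes "ismor p A B \<phi>"
  shows "fst \<phi> \<in> carrier_mat (length (gens0 B)) (length (gens0 A))"
    and "snd \<phi> \<in> carrier_mat (length (gens1 B)) (length (gens1 A))"
  using assms unfolding ismor_def by blast+

lemma qshift_simps [simp]:
  "gens0 (qshift k C) = map (\<lambda>d. d + k) (gens0 C)"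
  "gens1 (qshift k C) = map (\<lambda>d. d + k) (gens1 C)"
  "dif0 (qshift k C) = dif0 C" "dif1 (qshift k C) = dif1 C"
  by (simp_all add: qshift_def)

lemma wf_mf_qshift [simp]: "wf_mf (qshift k C) \<longleftrightarrow> wf_mf C"
  by (simp add: wf_mf_def)

lemma htpy_refl:
  assumes "wf_mf C" and "wf_mf D"
    and "fst \<phi> \<in> carrier_mat (length (gens0 D)) (length (gens0 C))"
    and "snd \<phi> \<in> carrier_mat (length (gens1 D)) (length (gens1 C))"
  shows "htpy C D \<phi> \<phi>"
  unfolding htpy_def
proof (intro exI conjI)
  show "fst \<phi> - fst \<phi> = dif1 D * 0\<^sub>m (length (gens1 D)) (length (gens0 C))
      + 0\<^sub>m (length (gens0 D)) (length (gens1 C)) * dif0 C"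
    and "snd \<phi> - snd \<phi> = dif0 D * 0\<^sub>m (length (gens0 D)) (length (gens1 C))
      + 0\<^sub>m (length (gens1 D)) (length (gens0 C)) * dif1 C"
    using assms unfolding wf_mf_def by (auto intro!: eq_matI)
qed simp_all

lemma bar_invariant_mfD:
  assumes "bar_invariant_mf C"
  shows "dim_row (dif0 C) = length (gens1 C)" and "dim_col (dif0 C) = length (gens0 C)"
    and "dim_row (dif1 C) = length (gens0 C)" and "dim_col (dif1 C) = length (gens1 C)"
    and "map_mat rbar (dif0 C) = dif0 C" and "map_mat rbar (dif1 C) = dif1 C"
  using assms by (auto simp: bar_invariant_mf_def wf_mf_def)

lemma ismor_mdpart:
  assumes A: "bar_invariant_mf A" and B: "bar_invariant_mf B" and \<phi>: "ismor p A B \<phi>"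
  shows "ismor p A (qshift 2 B) (mdpart \<phi>)"
proof -
  note c0 = ismor_carrier(1)[OF \<phi>] and c1 = ismor_carrier(2)[OF \<phi>]
  note dims = bar_invariant_mfD[OF A] bar_invariant_mfD[OF B] carrier_matD[OF c0] carrier_matD[OF c1]
  have "dif0 B * map_mat dpart (fst \<phi>) = map_mat dpart (dif0 B * fst \<phi>)"
    using dims by (simp add: map_mat_dpart_mult_rbar_fixed_left)
  also have "\<dots> = map_mat dpart (snd \<phi> * dif0 A)" using \<phi> by (simp add: ismor_def)
  also have "\<dots> = map_mat dpart (snd \<phi>) * dif0 A"
    using dims by (simp add: map_mat_dpart_mult_rbar_fixed_right)
  finally have comm0: "dif0 B * map_mat dpart (fst \<phi>) = map_mat dpart (snd \<phi>) * dif0 A" .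
  have "dif1 B * map_mat dpart (snd \<phi>) = map_mat dpart (dif1 B * snd \<phi>)"
    using dims by (simp add: map_mat_dpart_mult_rbar_fixed_left)
  also have "\<dots> = map_mat dpart (fst \<phi> * dif1 A)" using \<phi> by (simp add: ismor_def)
  also have "\<dots> = map_mat dpart (fst \<phi>) * dif1 A"
    using dims by (simp add: map_mat_dpart_mult_rbar_fixed_right)
  finally have comm1: "dif1 B * map_mat dpart (snd \<phi>) = map_mat dpart (fst \<phi>) * dif1 A" .
  show ?thesis
    using \<phi> c0 c1 comm0 comm1
    by (auto simp: ismor_def mdpart_def diff_diff_eq[symmetric] intro!: ishom_dpart)
qed

lemma htpy_mdpart:
  assumes A: "bar_invariant_mf A" and B: "bar_invariant_mf B"
    and \<phi>: "ismor p A B \<phi>" and \<phi>': "ismor p A B \<phi>'" and htpy: "htpy A B \<phi> \<phi>'"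
  shows "htpy A (qshift 2 B) (mdpart \<phi>) (mdpart \<phi>')"
proof -
  obtain h0 h1 where
    h0: "h0 \<in> carrier_mat (length (gens1 B)) (length (gens0 A))" and
    h1: "h1 \<in> carrier_mat (length (gens0 B)) (length (gens1 A))" and
    htpy0: "fst \<phi> - fst \<phi>' = dif1 B * h0 + h1 * dif0 A" and
    htpy1: "snd \<phi> - snd \<phi>' = dif0 B * h1 + h0 * dif1 A"
    using htpy unfolding htpy_def by blast
  note dif = A[unfolded bar_invariant_mf_def wf_mf_def] B[unfolded bar_invariant_mf_def wf_mf_def]
  have "map_mat dpart (fst \<phi>) - map_mat dpart (fst \<phi>') = map_mat dpart (fst \<phi> - fst \<phi>')"
    by (rule map_mat_dpart_diff[symmetric]) (rule ismor_carrier[OF \<phi>], rule ismor_carrier[OF \<phi>'])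
  also have "\<dots> = dif1 B * map_mat dpart h0 + map_mat dpart h1 * dif0 A"
    unfolding htpy0 using dif h0 h1 by (intro map_mat_dpart_homotopy) auto
  finally have htpy0': "map_mat dpart (fst \<phi>) - map_mat dpart (fst \<phi>')
      = dif1 B * map_mat dpart h0 + map_mat dpart h1 * dif0 A" .
  have "map_mat dpart (snd \<phi>) - map_mat dpart (snd \<phi>') = map_mat dpart (snd \<phi> - snd \<phi>')"
    by (rule map_mat_dpart_diff[symmetric]) (rule ismor_carrier[OF \<phi>], rule ismor_carrier[OF \<phi>'])
  also have "\<dots> = dif0 B * map_mat dpart h1 + map_mat dpart h0 * dif1 A"
    unfolding htpy1 using dif h0 h1 by (intro map_mat_dpart_homotopy) auto
  finally have htpy1': "map_mat dpart (snd \<phi>) - map_mat dpart (snd \<phi>')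
      = dif0 B * map_mat dpart h1 + map_mat dpart h0 * dif1 A" .
  show ?thesis
    unfolding htpy_def mdpart_def using h0 h1 htpy0' htpy1'
    by (intro exI[of _ "map_mat dpart h0"] exI[of _ "map_mat dpart h1"]) simp
qed

lemma mdpart_madd:
  assumes "ismor p A B \<phi>" and "ismor p A B \<phi>'"
  shows "mdpart (madd \<phi> \<phi>') = madd (mdpart \<phi>) (mdpart \<phi>')"
  using map_mat_dpart_add[OF ismor_carrier(1)[OF assms(1)] ismor_carrier(1)[OF assms(2)]]
    map_mat_dpart_add[OF ismor_carrier(2)[OF assms(1)] ismor_carrier(2)[OF assms(2)]]
  by (simp add: mdpart_def madd_def)

lemma msub_mbar_eq_mcomp_fnat_mdpart:
  assumes "ismor p A B \<phi>"
  shows "msub \<phi> (mbar \<phi>) = mcomp (fnat B) (mdpart \<phi>)"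
    and "msub \<phi> (mbar \<phi>) = mcomp (mdpart \<phi>) (fnat A)"
  using ismor_carrier[OF assms]
  by (simp_all add: msub_def mbar_def mcomp_def fnat_def mdpart_def xa_plus_xb_mult_map_mat_dpart)

lemma mdpart_mcomp:
  assumes "ismor p A B \<phi>" and "ismor p B C \<psi>"
  shows "mdpart (mcomp \<psi> \<phi>) = madd (mcomp (mdpart \<psi>) \<phi>) (mcomp (mbar \<psi>) (mdpart \<phi>))"
    and "mdpart (mcomp \<psi> \<phi>) = madd (mcomp (mdpart \<psi>) (mbar \<phi>)) (mcomp \<psi> (mdpart \<phi>))"
  using ismor_carrier[OF assms(1)] ismor_carrier[OF assms(2)]
  by (simp add: mdpart_def madd_def mcomp_def mbar_def map_mat_dpart_mult carrier_matD,
      simp add: mdpart_def madd_def mcomp_def mbar_def map_mat_dpart_mult' carrier_matD)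

section \<open>The objects of hmf_2 are bar-invariant\<close>

lemma rbar_peval: "rbar (peval p r) = peval p (rbar r)"
proof -
  have "rbar (peval p r) = poly (map_poly rbar (map_poly emb p)) (rbar r)"
    unfolding peval_def by (rule rbar.poly_map_poly[symmetric])
  also have "map_poly rbar (map_poly emb p) = map_poly emb p"
    by (subst map_poly_map_poly) (auto simp: o_def)
  finally show ?thesis by (simp add: peval_def)
qed

lemma peval_uminus:
  assumes "\<forall>k. odd k \<longrightarrow> coeff p k = 0"
  shows "peval p (- x) = peval p x"
  unfolding peval_def poly_altdef
proof (rule sum.cong)
  fix i
  show "coeff (map_poly emb p) i * (- x) ^ i = coeff (map_poly emb p) i * x ^ i"
    using assms by (cases "even i") (simp_all add: coeff_map_poly)
qed simp

lemma rbar_wpot: "\<forall>k. odd k \<longrightarrow> coeff p k = 0 \<Longrightarrow> rbar (wpot p) = wpot p"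
  by (simp add: wpot_def rbar_peval peval_uminus rbar.hom_add rbar.hom_minus)

lemma rbar_v1: "rbar v1 = v1"
  by (simp add: v1_def xd_def rbar.hom_add rbar.hom_minus)

lemma rbar_v2: "rbar v2 = v2"
  by (simp add: v2_def xd_def rbar.hom_add rbar.hom_minus rbar.hom_mult algebra_simps)

text \<open>Divisibility of w by v1 and v2 is checked in Q[x_a,x_b][x_c], where ya and yb denote x_a and
  x_b: as a polynomial in x_c, w vanishes at x_c = x_a and at x_c = x_b.\<close>

definition ya :: "rat poly poly" where "ya = [:[:0, 1:]:]"
definition yb :: "rat poly poly" where "yb = [:0, 1:]"

lemma poly_peval: "poly (peval p r) s = poly (map_poly (\<lambda>c. [:[:c:]:]) p) (poly r s)"
proof -
  have "poly (peval p r) s = poly (map_poly (\<lambda>q. poly q s) (map_poly emb p)) (poly r s)"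
    unfolding peval_def by (rule poly_hom.poly_map_poly[symmetric])
  also have "map_poly (\<lambda>q. poly q s) (map_poly emb p) = map_poly (\<lambda>c. [:[:c:]:]) p"
    by (subst map_poly_map_poly) (auto simp: emb_def o_def)
  finally show ?thesis .
qed

lemma poly_wpot:
  "poly (wpot p) s = poly (map_poly (\<lambda>c. [:[:c:]:]) p) s
     + poly (map_poly (\<lambda>c. [:[:c:]:]) p) (ya + yb - s)
     - poly (map_poly (\<lambda>c. [:[:c:]:]) p) ya - poly (map_poly (\<lambda>c. [:[:c:]:]) p) yb"
  by (simp add: wpot_def poly_peval xd_def xa_def xb_def xc_def ya_def yb_def)

lemma v1_eq: "v1 = [:- ya, 1:]"
  by (simp add: v1_def xa_def xc_def ya_def)

lemma v2_eq: "v2 = v1 * [:- yb, 1:]"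
  by (simp add: v2_def v1_def xb_def xc_def yb_def)

lemma v1_dvd_wpot: "v1 dvd wpot p"
  unfolding v1_eq by (subst poly_eq_0_iff_dvd[symmetric]) (simp add: poly_wpot)

lemma v2_dvd_wpot: "v2 dvd wpot p"
proof -
  obtain q where w: "wpot p = v1 * q" using v1_dvd_wpot by blast
  have "0 = poly (wpot p) yb" by (simp add: poly_wpot)
  also have "\<dots> = (yb - ya) * poly q yb" by (simp add: w v1_eq algebra_simps)
  moreover have "yb - ya \<noteq> 0" by (simp add: ya_def yb_def)
  ultimately have "poly q yb = 0" by simp
  then obtain q' where "q = [:- yb, 1:] * q'" using poly_eq_0_iff_dvd by blast
  then have "wpot p = v2 * q'" using w by (simp only: v2_eq mult.assoc)
  then show ?thesis by simp
qed

lemma v1_nonzero: "v1 \<noteq> 0" and v2_nonzero: "v2 \<noteq> 0"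
  by (simp_all add: v2_eq v1_eq)

lemma rbar_div_fixed:
  assumes "v dvd w" "v \<noteq> 0" "rbar v = v" "rbar w = w"
  shows "rbar (w div v) = w div v"
proof -
  have "v * rbar (w div v) = rbar (v * (w div v))" using assms(3) by (simp add: rbar.hom_mult)
  also have "\<dots> = v * (w div v)" using assms(1,4) by simp
  finally show ?thesis using assms(2) by simp
qed

lemma bar_invariant_mf_Kmf: "rbar u = u \<Longrightarrow> rbar v = v \<Longrightarrow> bar_invariant_mf (Kmf u v k0 k1)"
  by (auto simp: bar_invariant_mf_def wf_mf_def Kmf_def intro!: eq_matI)

lemma bar_invariant_mf_qshift: "bar_invariant_mf C \<Longrightarrow> bar_invariant_mf (qshift k C)"
  by (simp add: bar_invariant_mf_def)

lemma map_mat_rbar_uminus: "map_mat rbar (- M) = - map_mat rbar M"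
  by (rule eq_matI) (simp_all add: rbar.hom_uminus)

lemma map_mat_rbar_zero: "map_mat rbar (0\<^sub>m n m) = 0\<^sub>m n m"
  by (rule eq_matI) simp_all

lemma bar_invariant_mf_zshift: "bar_invariant_mf C \<Longrightarrow> bar_invariant_mf (zshift C)"
  by (simp add: bar_invariant_mf_def wf_mf_def zshift_def map_mat_rbar_uminus)

lemma map_mat_rbar_block_diagonal:
  assumes "A \<in> carrier_mat n1 m1" and "D \<in> carrier_mat n2 m2"
    and "map_mat rbar A = A" and "map_mat rbar D = D"
  shows "map_mat rbar (four_block_mat A (0\<^sub>m n1 m2) (0\<^sub>m n2 m1) D)
    = four_block_mat A (0\<^sub>m n1 m2) (0\<^sub>m n2 m1) D"
  by (simp add: map_four_block_mat[OF assms(1) zero_carrier_mat zero_carrier_mat assms(2)]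
      map_mat_rbar_zero assms(3,4))

lemma bar_invariant_mf_dsum:
  "bar_invariant_mf C \<Longrightarrow> bar_invariant_mf D \<Longrightarrow> bar_invariant_mf (dsum C D)"
  unfolding bar_invariant_mf_def wf_mf_def dsum_def
  by (simp add: map_mat_rbar_block_diagonal)

lemma bar_invariant_mf_zero_mf: "bar_invariant_mf zero_mf"
  by (simp add: bar_invariant_mf_def wf_mf_def zero_mf_def map_mat_rbar_zero)

lemma in_hmf2_bar_invariant_mf:
  assumes even: "\<forall>k. odd k \<longrightarrow> coeff p k = 0" and "in_hmf2 p C"
  shows "bar_invariant_mf C"
proof -
  have "bar_invariant_mf (CDr p)" and "bar_invariant_mf (CDs p)"
    unfolding CDr_def CDs_def
    using rbar_div_fixed[OF v1_dvd_wpot v1_nonzero rbar_v1 rbar_wpot[OF even]]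
      rbar_div_fixed[OF v2_dvd_wpot v2_nonzero rbar_v2 rbar_wpot[OF even]]
    by (simp_all add: bar_invariant_mf_Kmf rbar_v1 rbar_v2)
  then have summand: "bar_invariant_mf (summand p x)" for x
    by (cases x) (simp add: bar_invariant_mf_qshift bar_invariant_mf_zshift)
  have "bar_invariant_mf (mfobj p xs)" for xs
    by (induct xs) (simp_all add: bar_invariant_mf_zero_mf bar_invariant_mf_dsum summand)
  then show ?thesis using assms(2) unfolding in_hmf2_def by blast
qed

theorem lemma6p2:
  fixes p :: "rat poly"
  assumes even: "\<forall>k. odd k \<longrightarrow> coeff p k = 0"
  shows "\<exists>dd :: mf \<Rightarrow> mf \<Rightarrow> mor \<Rightarrow> mor.
    (\<forall>A B \<phi>. in_hmf2 p A \<and> in_hmf2 p B \<and> ismor p A B \<phi> \<longrightarrow>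
        ismor p A (qshift 2 B) (dd A B \<phi>)) \<and>
    (\<forall>A B \<phi> \<phi>'. in_hmf2 p A \<and> in_hmf2 p B \<and> ismor p A B \<phi> \<and> ismor p A B \<phi>' \<and>
        htpy A B \<phi> \<phi>' \<longrightarrow> htpy A (qshift 2 B) (dd A B \<phi>) (dd A B \<phi>')) \<and>
    (\<forall>A B \<phi> \<phi>'. in_hmf2 p A \<and> in_hmf2 p B \<and> ismor p A B \<phi> \<and> ismor p A B \<phi>' \<longrightarrow>
        htpy A (qshift 2 B) (dd A B (madd \<phi> \<phi>')) (madd (dd A B \<phi>) (dd A B \<phi>'))) \<and>
    (\<forall>A B \<phi>. in_hmf2 p A \<and> in_hmf2 p B \<and> ismor p A B \<phi> \<longrightarrow>
        htpy A B (msub \<phi> (mbar \<phi>)) (mcomp (fnat B) (dd A B \<phi>)) \<and>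
        htpy (qshift 2 A) (qshift 2 B) (msub \<phi> (mbar \<phi>)) (mcomp (dd A B \<phi>) (fnat A))) \<and>
    (\<forall>A B C \<phi> \<psi>. in_hmf2 p A \<and> in_hmf2 p B \<and> in_hmf2 p C \<and>
        ismor p A B \<phi> \<and> ismor p B C \<psi> \<longrightarrow>
        htpy A (qshift 2 C) (dd A C (mcomp \<psi> \<phi>))
             (madd (mcomp (dd B C \<psi>) \<phi>) (mcomp (mbar \<psi>) (dd A B \<phi>))) \<and>
        htpy A (qshift 2 C) (dd A C (mcomp \<psi> \<phi>))
             (madd (mcomp (dd B C \<psi>) (mbar \<phi>)) (mcomp \<psi> (dd A B \<phi>))))"
proof (intro exI[of _ "\<lambda>_ _. mdpart"] conjI allI impI; elim conjE)
  have inv: "bar_invariant_mf C" if "in_hmf2 p C" for C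
    by (rule in_hmf2_bar_invariant_mf[OF even that])
  then have wf: "wf_mf C" if "in_hmf2 p C" for C
    using that by (simp add: bar_invariant_mf_def)
  show "ismor p A (qshift 2 B) (mdpart \<phi>)"
    if "in_hmf2 p A" "in_hmf2 p B" "ismor p A B \<phi>" for A B \<phi>
    using that by (intro ismor_mdpart inv)
  show "htpy A (qshift 2 B) (mdpart \<phi>) (mdpart \<phi>')"
    if "in_hmf2 p A" "in_hmf2 p B" "ismor p A B \<phi>" "ismor p A B \<phi>'" "htpy A B \<phi> \<phi>'"
    for A B \<phi> \<phi>'
    using that by (intro htpy_mdpart inv)
  show "htpy A (qshift 2 B) (mdpart (madd \<phi> \<phi>')) (madd (mdpart \<phi>) (mdpart \<phi>'))"
    if "in_hmf2 p A" "in_hmf2 p B" "ismor p A B \<phi>" "ismor p A B \<phi>'" for A B \<phi> \<phi>'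
    unfolding mdpart_madd[OF that(3,4)]
    using that wf[OF that(1)] wf[OF that(2)] ismor_carrier[OF that(3)] ismor_carrier[OF that(4)]
    by (auto simp: mdpart_def madd_def intro!: htpy_refl)
  show "htpy A B (msub \<phi> (mbar \<phi>)) (mcomp (fnat B) (mdpart \<phi>))"
    and "htpy (qshift 2 A) (qshift 2 B) (msub \<phi> (mbar \<phi>)) (mcomp (mdpart \<phi>) (fnat A))"
    if "in_hmf2 p A" "in_hmf2 p B" "ismor p A B \<phi>" for A B \<phi>
    unfolding msub_mbar_eq_mcomp_fnat_mdpart[OF that(3), symmetric]
    using that wf[OF that(1)] wf[OF that(2)] ismor_carrier[OF that(3)]
    by (auto simp: msub_def mbar_def intro!: htpy_refl)
  show "htpy A (qshift 2 C) (mdpart (mcomp \<psi> \<phi>))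
      (madd (mcomp (mdpart \<psi>) \<phi>) (mcomp (mbar \<psi>) (mdpart \<phi>)))"
    and "htpy A (qshift 2 C) (mdpart (mcomp \<psi> \<phi>))
      (madd (mcomp (mdpart \<psi>) (mbar \<phi>)) (mcomp \<psi> (mdpart \<phi>)))"
    if "in_hmf2 p A" "in_hmf2 p B" "in_hmf2 p C" "ismor p A B \<phi>" "ismor p B C \<psi>"
    for A B C \<phi> \<psi>
    unfolding mdpart_mcomp[OF that(4,5), symmetric]
    using that wf[OF that(1)] wf[OF that(3)] ismor_carrier[OF that(4)] ismor_carrier[OF that(5)]
    by (auto simp: mdpart_def mcomp_def intro!: htpy_refl)
qed

end
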